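(* Fix an integer $b\geq 3$. For a positive integer $c$ and $d\in\{1,2\}$ set \[ I_{d,1}(c)=\bigcup_{j\in\mathbb{Z}}\left[\frac{b^{-j}}{db^c-2},\frac{2b^{-j}}{db^c-1}\right]\cap[0,1]. \] Then there exists $c_0$ such that for all integers $c\geq c_0$, \[ 2\mu_{ST}(I_{2,1}(c))-2\mu_{ST}(I_{1,1}(c))>\frac{1}{40}. \]
   Context: $\mu_{ST}$ denotes the Sato–Tate measure on $[-1,1]$, $d\mu_{ST}=\frac{2}{\pi}\sqrt{1-t^2}\,dt$. *)

theory Defs
  imports "HOL-Analysis.Analysis"
begin

definition sato_tate :: "real measure" where
  "sato_tate = density lborel
     (\<lambda>t. ennreal (indicator {-1..1} t * (2 / pi) * sqrt (1 - t\<^sup>2)))"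

definition mu_ST :: "real set \<Rightarrow> real" where
  "mu_ST A = measure sato_tate A"

definition I_d1 :: "nat \<Rightarrow> nat \<Rightarrow> nat \<Rightarrow> real set" where
  "I_d1 b d c = (\<Union>j::int. {real b powi (-j) / (real d * real b ^ c - 2) ..
                            2 * real b powi (-j) / (real d * real b ^ c - 1)}) \<inter> {0..1}"

end

theory Submission
  imports Defs
begin

text \<open>
  Write \<open>B = b^c\<close> and \<open>u = 1/b\<close>. The interval of \<open>I_{d,1}(c)\<close> with index \<open>j = k - c\<close> is
  \<open>[B u^k/(dB - 2), 2B u^k/(dB - 1)]\<close>. For \<open>d = 2\<close> it contains \<open>[p u^k, u^k]\<close> with
  \<open>p = B/(2B - 2) \<approx> 1/2\<close>, so \<open>I_{2,1}(c)\<close> contains three disjoint intervals (\<open>k = 0, 1, 2\<close>).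
  For \<open>d = 1\<close> the intervals with \<open>k \<le> 0\<close> lie beyond 1, so \<open>I_{1,1}(c)\<close> is covered by
  \<open>[\<alpha> u^k, 2\<beta> u^k]\<close> for \<open>k = 1, 2\<close> and \<open>[0, 2\<beta> u^3]\<close>, where \<open>\<alpha>, \<beta> \<approx> 1\<close>.
  Bounding the density \<open>\<surd>(1 - t\<^sup>2)\<close> on each interval by its values at the endpoints, and
  integrating it exactly on \<open>[1/2, 1]\<close>, leaves a margin once \<open>B\<close> is large; for \<open>b = 3\<close> the
  interval \<open>[\<alpha>/3, 2\<beta>/3]\<close> must be split at \<open>1/2\<close> to be estimated sharply enough.
\<close>

definition semicircle :: "real \<Rightarrow> real" where
  "semicircle t = sqrt (1 - t\<^sup>2)"

lemma continuous_on_semicircle [continuous_intros]: "continuous_on S semicircle"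
  unfolding semicircle_def by (intro continuous_intros)

lemma semicircle_integrable_on: "semicircle integrable_on {a..c}"
  by (intro integrable_continuous_interval continuous_on_semicircle)

lemma semicircle_nonneg: "\<bar>t\<bar> \<le> 1 \<Longrightarrow> 0 \<le> semicircle t"
  by (simp add: semicircle_def abs_square_le_1)

lemma semicircle_le_one: "semicircle t \<le> 1"
  by (simp add: semicircle_def)

lemma semicircle_antimono: "0 \<le> s \<Longrightarrow> s \<le> t \<Longrightarrow> semicircle t \<le> semicircle s"
  unfolding semicircle_def by (simp add: power_mono)

lemma sets_sato_tate [simp]: "sets sato_tate = sets borel"
  unfolding sato_tate_def by simp

lemma emeasure_sato_tate_Icc:
  assumes "-1 \<le> a" "c \<le> 1"
  shows "emeasure sato_tate {a..c} = ennreal (2/pi * integral {a..c} semicircle)"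
proof -
  have "emeasure sato_tate {a..c} =
      (\<integral>\<^sup>+ x. ennreal (indicator {-1..1} x * (2/pi) * sqrt (1 - x\<^sup>2)) * indicator {a..c} x \<partial>lborel)"
    unfolding sato_tate_def by (rule emeasure_density) auto
  also have "\<dots> = (\<integral>\<^sup>+ x. ennreal (indicator {a..c} x * (2/pi * semicircle x)) \<partial>lborel)"
    using assms by (intro nn_integral_cong) (auto simp: indicator_def semicircle_def)
  also have "\<dots> = ennreal (2/pi * integral {a..c} semicircle)"
  proof (intro nn_integral_has_integral_lebesgue has_integral_mult_right integrable_integral
      semicircle_integrable_on)
    show "0 \<le> 2/pi * semicircle x" if "x \<in> {a..c}" for x
      using that assms semicircle_nonneg[of x] by (simp add: abs_le_iff)
  qed
  finally show ?thesis .
qed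

lemma finite_measure_sato_tate: "finite_measure sato_tate"
proof
  have "emeasure sato_tate (space sato_tate) =
      (\<integral>\<^sup>+ x. ennreal (indicator {-1..1} x * (2/pi) * sqrt (1 - x\<^sup>2)) * indicator {-1..1} x \<partial>lborel)"
    unfolding sato_tate_def by (subst emeasure_density) (auto intro!: nn_integral_cong simp: indicator_def)
  also have "\<dots> = emeasure sato_tate {-1..1}"
    unfolding sato_tate_def by (subst emeasure_density) auto
  finally show "emeasure sato_tate (space sato_tate) \<noteq> \<infinity>"
    by (simp add: emeasure_sato_tate_Icc)
qed

interpretation sato_tate: finite_measure sato_tate
  by (rule finite_measure_sato_tate)

lemma integral_semicircle_nonneg: "-1 \<le> a \<Longrightarrow> c \<le> 1 \<Longrightarrow> 0 \<le> integral {a..c} semicircle"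
  by (intro integral_nonneg semicircle_integrable_on semicircle_nonneg) auto

lemma mu_ST_Icc:
  assumes "-1 \<le> a" "c \<le> 1"
  shows "mu_ST {a..c} = 2/pi * integral {a..c} semicircle"
  unfolding mu_ST_def measure_def
  using assms integral_semicircle_nonneg[OF assms] by (simp add: emeasure_sato_tate_Icc)

lemma integral_semicircle_bounds:
  assumes "0 \<le> a" "a \<le> c"
  shows integral_semicircle_le: "integral {a..c} semicircle \<le> semicircle a * (c - a)"
    and integral_semicircle_ge: "semicircle c * (c - a) \<le> integral {a..c} semicircle"
proof -
  have const: "((\<lambda>_. K) has_integral K * (c - a)) {a..c}" for K
    using has_integral_const_real[of K a c] assms by (simp add: mult.commute)
  have int: "(semicircle has_integral integral {a..c} semicircle) {a..c}"
    by (intro integrable_integral semicircle_integrable_on)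
  show "integral {a..c} semicircle \<le> semicircle a * (c - a)"
    using assms by (intro has_integral_le[OF int const] semicircle_antimono) auto
  show "semicircle c * (c - a) \<le> integral {a..c} semicircle"
    using assms by (intro has_integral_le[OF const int] semicircle_antimono) auto
qed

lemma integral_semicircle_le_length: "a \<le> c \<Longrightarrow> integral {a..c} semicircle \<le> c - a"
  using integral_le[OF semicircle_integrable_on integrable_const_ivl[of 1 a c] semicircle_le_one]
  by simp

lemma integral_semicircle_le_two_steps:
  assumes "0 \<le> a" "a \<le> m" "m \<le> c"
  shows "integral {a..c} semicircle \<le> semicircle a * (m - a) + semicircle m * (c - m)"
proof -
  have "integral {a..c} semicircle = integral {a..m} semicircle + integral {m..c} semicircle"
    using assms by (intro Henstock_Kurzweil_Integration.integral_combine[symmetric]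
        semicircle_integrable_on) auto
  then show ?thesis
    using assms integral_semicircle_le[of a m] integral_semicircle_le[of m c] by simp
qed

lemma integral_semicircle_half_one: "integral {1/2..1} semicircle = pi/6 - sqrt 3 / 8"
proof -
  define G where "G t = (t * sqrt (1 - t\<^sup>2) + arcsin t) / 2" for t :: real
  have "(semicircle has_integral G 1 - G (1/2)) {1/2..1}"
  proof (rule fundamental_theorem_of_calculus_interior)
    show "continuous_on {1/2..1::real} G"
      unfolding G_def by (intro continuous_intros continuous_on_arcsin) auto
    fix x :: real assume x: "x \<in> {1/2<..<1}"
    then have "x\<^sup>2 < 1" by (simp add: abs_square_less_1)
    then have s: "sqrt (1 - x\<^sup>2) > 0" "sqrt (1 - x\<^sup>2) * sqrt (1 - x\<^sup>2) = 1 - x\<^sup>2" by simp_all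
    have "(G has_real_derivative
        (sqrt (1 - x\<^sup>2) + x * (- (2 * x) / (2 * sqrt (1 - x\<^sup>2))) + inverse (sqrt (1 - x\<^sup>2))) / 2) (at x)"
      unfolding G_def using x \<open>x\<^sup>2 < 1\<close>
      by (auto intro!: derivative_eq_intros DERIV_arcsin simp: power2_eq_square inverse_eq_divide)
    also have "(sqrt (1 - x\<^sup>2) + x * (- (2 * x) / (2 * sqrt (1 - x\<^sup>2))) + inverse (sqrt (1 - x\<^sup>2))) / 2
        = semicircle x"
      using s by (simp add: semicircle_def field_simps power2_eq_square)
    finally show "(G has_vector_derivative semicircle x) (at x)"
      by (simp add: has_real_derivative_iff_has_vector_derivative)
  qed simp
  moreover have "sqrt (1 - (1/2::real)\<^sup>2) = sqrt 3 / 2"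
    by (simp add: power2_eq_square real_sqrt_divide)
  then have "G 1 - G (1/2) = pi/6 - sqrt 3 / 8"
    unfolding G_def by (simp add: field_simps)
  ultimately show ?thesis by (simp add: integral_unique)
qed

lemma integral_semicircle_p_one_ge:
  assumes "1/2 \<le> p" "p \<le> 1"
  shows "pi/6 - sqrt 3 / 8 - (p - 1/2) \<le> integral {p..1} semicircle"
proof -
  have "integral {1/2..p} semicircle + integral {p..1} semicircle = pi/6 - sqrt 3 / 8"
    using assms integral_semicircle_half_one
    by (subst Henstock_Kurzweil_Integration.integral_combine) (auto intro: semicircle_integrable_on)
  then show ?thesis using integral_semicircle_le_length[of "1/2" p] assms by simp
qed

lemma semicircle_numerals:
  "0.9428 \<le> semicircle (1/3)" "semicircle (1/3) \<le> 0.9429"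
  "0.993 \<le> semicircle (1/9)" "semicircle (1/2) \<le> 0.8661"
  unfolding semicircle_def
  by (rule real_le_rsqrt real_le_lsqrt; simp add: power2_eq_square)+

lemma sqrt_3_le: "sqrt 3 \<le> 1.7321"
  by (rule real_le_lsqrt) (simp_all add: power2_eq_square)

lemma integral_semicircle_gap_third:
  assumes p: "1/2 \<le> p" "p \<le> 0.5001" and al: "1 \<le> al" "al \<le> 1.001" and be: "1 \<le> be" "be \<le> 1.001"
  shows "integral {al/3..2*be/3} semicircle + integral {al/9..2*be/9} semicircle
           + integral {0..2*be/27} semicircle + 0.02
         \<le> integral {p..1} semicircle + integral {p/3..1/3} semicircle + integral {p/9..1/9} semicircle"
proof -
  have "0.9428 * (1/3 - p/3) \<le> semicircle (1/3) * (1/3 - p/3)"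
    using p semicircle_numerals(1) by (intro mult_right_mono) auto
  also have "\<dots> \<le> integral {p/3..1/3} semicircle"
    using p by (intro integral_semicircle_ge) auto
  finally have I1: "0.9428 * (1/3 - p/3) \<le> integral {p/3..1/3} semicircle" .
  have "0.993 * (1/9 - p/9) \<le> semicircle (1/9) * (1/9 - p/9)"
    using p semicircle_numerals(3) by (intro mult_right_mono) auto
  also have "\<dots> \<le> integral {p/9..1/9} semicircle"
    using p by (intro integral_semicircle_ge) auto
  finally have I2: "0.993 * (1/9 - p/9) \<le> integral {p/9..1/9} semicircle" .
  have "integral {al/3..2*be/3} semicircle
      \<le> semicircle (al/3) * (1/2 - al/3) + semicircle (1/2) * (2*be/3 - 1/2)"
    using al be by (intro integral_semicircle_le_two_steps) auto
  also have "\<dots> \<le> 0.9429 * (1/2 - al/3) + 0.8661 * (2*be/3 - 1/2)"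
    using al be semicircle_antimono[of "1/3" "al/3"] semicircle_numerals
    by (intro add_mono mult_right_mono) auto
  finally have J1: "integral {al/3..2*be/3} semicircle \<le> 0.9429 * (1/2 - al/3) + 0.8661 * (2*be/3 - 1/2)" .
  have J2: "integral {al/9..2*be/9} semicircle \<le> 2*be/9 - al/9"
    using al be by (intro integral_semicircle_le_length) auto
  have J3: "integral {0..2*be/27} semicircle \<le> 2*be/27"
    using be integral_semicircle_le_length[of 0 "2*be/27"] by simp
  have I0: "pi/6 - sqrt 3 / 8 - (p - 1/2) \<le> integral {p..1} semicircle"
    using p by (intro integral_semicircle_p_one_ge) auto
  show ?thesis
    using I0 I1 I2 J1 J2 J3 p al be sqrt_3_le pi_approx by simp argo
qed

lemma integral_semicircle_gap_le_quarter:
  assumes u: "0 < u" "u \<le> 1/4"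
    and p: "1/2 \<le> p" "p \<le> 0.5001" and al: "1 \<le> al" "al \<le> 1.001" and be: "1 \<le> be" "be \<le> 1.001"
  shows "integral {al * u..2 * be * u} semicircle + integral {al * u\<^sup>2..2 * be * u\<^sup>2} semicircle
           + integral {0..2 * be * u ^ 3} semicircle + 0.02
         \<le> integral {p..1} semicircle + integral {p * u..u} semicircle
           + integral {p * u\<^sup>2..u\<^sup>2} semicircle"
proof -
  have u2: "u\<^sup>2 \<le> 1/16" "u ^ 3 \<le> 1/64"
    using power_mono[of u "1/4" 2] power_mono[of u "1/4" 3] u by (simp_all add: power_divide)
  have "0.4713 * u \<le> 0.9428 * (u - p * u)"
    using p u mult_right_mono[of "0.4999" "1 - p" u] by (simp add: algebra_simps)
  also have "\<dots> \<le> semicircle u * (u - p * u)"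
    using p u semicircle_antimono[of u "1/3"] semicircle_numerals(1) by (intro mult_right_mono) auto
  also have "\<dots> \<le> integral {p * u..u} semicircle"
    using p u by (intro integral_semicircle_ge) auto
  finally have I1: "0.4713 * u \<le> integral {p * u..u} semicircle" .
  have "0 \<le> p * u\<^sup>2" using p by simp
  then have I2: "0 \<le> integral {p * u\<^sup>2..u\<^sup>2} semicircle"
    using u2 by (intro integral_semicircle_nonneg) auto
  have J1: "integral {al * u..2 * be * u} semicircle \<le> 1.002 * u"
    using integral_semicircle_le_length[of "al * u" "2 * be * u"]
      mult_right_mono[of "2 * be - al" "1.002" u] al be u by (simp add: algebra_simps)
  have "al * u\<^sup>2 \<le> 2 * be * u\<^sup>2" using al be by (intro mult_right_mono) auto
  then have "integral {al * u\<^sup>2..2 * be * u\<^sup>2} semicircle \<le> (2 * be - al) * u\<^sup>2"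
    using integral_semicircle_le_length by (simp add: algebra_simps)
  also have "\<dots> \<le> 1.002 * (1/16)"
    using al be u2 by (intro mult_mono) auto
  finally have J2: "integral {al * u\<^sup>2..2 * be * u\<^sup>2} semicircle \<le> 0.0627" by simp
  have J3: "integral {0..2 * be * u ^ 3} semicircle \<le> 0.0313"
    using integral_semicircle_le_length[of 0 "2 * be * u ^ 3"]
      mult_mono[of "2 * be" "2.002" "u ^ 3" "1/64"] be u u2 by simp
  have I0: "pi/6 - sqrt 3 / 8 - (p - 1/2) \<le> integral {p..1} semicircle"
    using p by (intro integral_semicircle_p_one_ge) auto
  show ?thesis
    using I0 I1 I2 J1 J2 J3 p u sqrt_3_le pi_approx by simp
qed

lemma integral_semicircle_gap:
  fixes b :: nat and u p al be :: real
  assumes b: "b \<ge> 3" and u: "u = 1 / real b"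
    and p: "1/2 \<le> p" "p \<le> 0.5001" and al: "1 \<le> al" "al \<le> 1.001" and be: "1 \<le> be" "be \<le> 1.001"
  shows "integral {al * u..2 * be * u} semicircle + integral {al * u\<^sup>2..2 * be * u\<^sup>2} semicircle
           + integral {0..2 * be * u ^ 3} semicircle + 0.02
         \<le> integral {p..1} semicircle + integral {p * u..u} semicircle
           + integral {p * u\<^sup>2..u\<^sup>2} semicircle"
proof (cases "b = 3")
  case True
  then show ?thesis
    using integral_semicircle_gap_third[OF p al be] unfolding u
    by (simp add: power2_eq_square power3_eq_cube)
next
  case False
  then have "0 < u" "u \<le> 1/4" unfolding u using b by (simp_all add: field_simps)
  then show ?thesis by (rule integral_semicircle_gap_le_quarter[OF _ _ p al be])
qed

lemma mu_ST_gap: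
  fixes b :: nat and u p al be :: real
  assumes b: "b \<ge> 3" and u: "u = 1 / real b"
    and p: "1/2 \<le> p" "p \<le> 0.5001" and al: "1 \<le> al" "al \<le> 1.001" and be: "1 \<le> be" "be \<le> 1.001"
  shows "1/40 < 2 * (mu_ST {p..1} + mu_ST {p * u..u} + mu_ST {p * u\<^sup>2..u\<^sup>2})
                - 2 * (mu_ST {al * u..2 * be * u} + mu_ST {al * u\<^sup>2..2 * be * u\<^sup>2} + mu_ST {0..2 * be * u ^ 3})"
    (is "_ < ?gap")
proof -
  have u3: "0 < u" "u \<le> 1/3" unfolding u using b by (simp_all add: field_simps)
  then have "u\<^sup>2 \<le> u" "u ^ 3 \<le> u"
    using power_decreasing[of 1 2 u] power_decreasing[of 1 3 u] by simp_all
  moreover have "2 * be * u \<le> 1" using be u3 mult_mono[of "2 * be" "2.002" u "1/3"] by simp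
  ultimately have hi: "u \<le> 1" "u\<^sup>2 \<le> 1" "2 * be * u \<le> 1" "2 * be * u\<^sup>2 \<le> 1" "2 * be * u ^ 3 \<le> 1"
    using be u3 by (auto intro: order.trans[OF mult_left_mono])
  have lo: "-1 \<le> p" "-1 \<le> p * u" "-1 \<le> p * u\<^sup>2" "-1 \<le> al * u" "-1 \<le> al * u\<^sup>2" "-1 \<le> (0::real)"
    using p al u3 by (simp_all add: order.trans[OF _ zero_le_mult_iff[THEN iffD2]])
  have "1/40 < 4/pi * 0.02" using pi_approx pi_gt3 by (simp add: field_simps)
  also have "\<dots> \<le> 4/pi * ((integral {p..1} semicircle + integral {p * u..u} semicircle
                 + integral {p * u\<^sup>2..u\<^sup>2} semicircle)
              - (integral {al * u..2 * be * u} semicircle + integral {al * u\<^sup>2..2 * be * u\<^sup>2} semicircle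
                 + integral {0..2 * be * u ^ 3} semicircle))"
    using integral_semicircle_gap[OF assms] by (intro mult_left_mono) auto
  also have "\<dots> = ?gap"
    unfolding mu_ST_Icc[OF lo(1) order.refl] mu_ST_Icc[OF lo(2) hi(1)] mu_ST_Icc[OF lo(3) hi(2)]
      mu_ST_Icc[OF lo(4) hi(3)] mu_ST_Icc[OF lo(5) hi(4)] mu_ST_Icc[OF lo(6) hi(5)]
    by (simp add: algebra_simps)
  finally show ?thesis .
qed

lemma mem_I_d1_iff:
  "y \<in> I_d1 b d c \<longleftrightarrow> 0 \<le> y \<and> y \<le> 1 \<and>
     (\<exists>n::int. real b powi n / (real d * real b ^ c - 2) \<le> y \<and>
               y \<le> 2 * real b powi n / (real d * real b ^ c - 1))"
  unfolding I_d1_def by (auto intro: exI[of _ "- _"])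

lemma I_d1_sets [measurable]: "I_d1 b d c \<in> sets borel"
  unfolding I_d1_def by (intro sets.Int sets.countable_UN') auto

lemma powi_diff_eq_power_mult:
  fixes b c :: nat and k :: int and B u :: real
  defines "B \<equiv> real b ^ c" and "u \<equiv> 1 / real b"
  assumes "b \<ge> 1"
  shows "real b powi (int c - k) = B * u powi k"
  using assms by (simp add: power_int_diff B_def u_def power_int_divide_distrib)

lemma Icc_subset_I_d1_two:
  fixes b c k :: nat and B u :: real
  defines "B \<equiv> real b ^ c" and "u \<equiv> 1 / real b"
  assumes "b \<ge> 1"
  shows "{B / (2 * B - 2) * u ^ k .. u ^ k} \<subseteq> I_d1 b 2 c"
proof
  fix y assume y: "y \<in> {B / (2 * B - 2) * u ^ k .. u ^ k}"
  have "B \<ge> 1" "u > 0" "u \<le> 1" using assms by (simp_all add: B_def u_def)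
  then have "0 \<le> B / (2 * B - 2) * u ^ k" "u ^ k \<le> 2 * (B * u ^ k) / (2 * B - 1)" "u ^ k \<le> 1"
    by (simp_all add: field_simps power_le_one)
  then show "y \<in> I_d1 b 2 c"
    using y powi_diff_eq_power_mult[OF assms(3), of c k] unfolding mem_I_d1_iff B_def u_def
    by (intro conjI exI[of _ "int c - int k"]) auto
qed

lemma I_d1_one_subset:
  fixes b c :: nat and B u :: real
  defines "B \<equiv> real b ^ c" and "u \<equiv> 1 / real b"
  assumes "b \<ge> 1" "B > 2"
  shows "I_d1 b 1 c \<subseteq> {B / (B - 2) * u .. 2 * (B / (B - 1)) * u} \<union>
           {B / (B - 2) * u\<^sup>2 .. 2 * (B / (B - 1)) * u\<^sup>2} \<union> {0 .. 2 * (B / (B - 1)) * u ^ 3}"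
proof
  fix y assume "y \<in> I_d1 b 1 c"
  then obtain n :: int where y: "0 \<le> y" "y \<le> 1"
    "real b powi n / (B - 2) \<le> y" "y \<le> 2 * real b powi n / (B - 1)"
    unfolding mem_I_d1_iff B_def by auto
  define k where "k = int c - n"
  have n: "real b powi n = B * u powi k"
    using powi_diff_eq_power_mult[OF assms(3), of c k] by (simp add: k_def B_def u_def)
  have u: "0 < u" "u \<le> 1" using assms by (simp_all add: u_def)
  consider "k \<le> 0" | "k = 1" | "k = 2" | "k \<ge> 3" by linarith
  then show "y \<in> {B / (B - 2) * u .. 2 * (B / (B - 1)) * u} \<union>
           {B / (B - 2) * u\<^sup>2 .. 2 * (B / (B - 1)) * u\<^sup>2} \<union> {0 .. 2 * (B / (B - 1)) * u ^ 3}"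
  proof cases
    case 1
    then have "u powi k \<ge> u powi 0" using u by (intro power_int_decreasing) auto
    then have "B / (B - 2) \<le> real b powi n / (B - 2)"
      using assms(4) unfolding n by (intro divide_right_mono) auto
    moreover have "1 < B / (B - 2)" using assms(4) by simp
    ultimately show ?thesis using y by linarith
  next
    case 2
    with y show ?thesis unfolding n by simp
  next
    case 3
    with y show ?thesis unfolding n by (simp add: power2_eq_square)
  next
    case 4
    then have "u powi k \<le> u powi 3" using u by (intro power_int_decreasing) auto
    then have "2 * real b powi n / (B - 1) \<le> 2 * (B / (B - 1)) * u ^ 3"
      using assms(4) unfolding n by (simp add: divide_right_mono)
    then show ?thesis using y by simp
  qed
qed

lemma mu_ST_I_d1_two_ge:
  fixes b c :: nat and B u p :: real
  defines "B \<equiv> real b ^ c" and "u \<equiv> 1 / real b" and "p \<equiv> B / (2 * B - 2)"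
  assumes "b \<ge> 3" "c \<ge> 1"
  shows "mu_ST {p..1} + mu_ST {p * u..u} + mu_ST {p * u\<^sup>2..u\<^sup>2} \<le> mu_ST (I_d1 b 2 c)"
proof -
  have "real b ^ 1 \<le> B" unfolding B_def using assms(4,5) by (intro power_increasing) auto
  then have "B \<ge> 3" using assms(4) by simp
  then have "1/2 \<le> p" by (simp add: p_def field_simps)
  moreover have "0 < u" "u \<le> 1/3" using assms by (simp_all add: u_def field_simps)
  ultimately have "u < p" "u\<^sup>2 < p * u" "u\<^sup>2 \<le> u"
    by (simp_all add: power2_eq_square mult_le_cancel_left1)
  then have disj: "{p..1} \<inter> {p * u..u} = {}" "({p..1} \<union> {p * u..u}) \<inter> {p * u\<^sup>2..u\<^sup>2} = {}"
    by auto
  have "{p..1} \<union> {p * u..u} \<union> {p * u\<^sup>2..u\<^sup>2} \<subseteq> I_d1 b 2 c"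
    using Icc_subset_I_d1_two[of b c 0] Icc_subset_I_d1_two[of b c 1]
      Icc_subset_I_d1_two[of b c 2] assms by (simp add: B_def u_def p_def)
  then have "measure sato_tate ({p..1} \<union> {p * u..u} \<union> {p * u\<^sup>2..u\<^sup>2}) \<le> mu_ST (I_d1 b 2 c)"
    unfolding mu_ST_def by (intro sato_tate.finite_measure_mono) auto
  then show ?thesis
    using disj unfolding mu_ST_def by (simp add: sato_tate.finite_measure_Union)
qed

lemma mu_ST_I_d1_one_le:
  fixes b c :: nat and B u al be :: real
  defines "B \<equiv> real b ^ c" and "u \<equiv> 1 / real b"
    and "al \<equiv> B / (B - 2)" and "be \<equiv> B / (B - 1)"
  assumes "b \<ge> 1" "B > 2"
  shows "mu_ST (I_d1 b 1 c) \<le>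
    mu_ST {al * u..2 * be * u} + mu_ST {al * u\<^sup>2..2 * be * u\<^sup>2} + mu_ST {0..2 * be * u ^ 3}"
proof -
  have "mu_ST (I_d1 b 1 c) \<le>
      measure sato_tate ({al * u..2 * be * u} \<union> {al * u\<^sup>2..2 * be * u\<^sup>2} \<union> {0..2 * be * u ^ 3})"
    unfolding mu_ST_def using I_d1_one_subset[OF assms(5,6)[unfolded B_def]]
    by (intro sato_tate.finite_measure_mono) (auto simp: B_def u_def al_def be_def)
  also have "\<dots> \<le> mu_ST {al * u..2 * be * u} + mu_ST {al * u\<^sup>2..2 * be * u\<^sup>2} + mu_ST {0..2 * be * u ^ 3}"
    unfolding mu_ST_def
    by (intro order.trans[OF measure_subadditive] add_right_mono measure_subadditive
        sato_tate.emeasure_finite) auto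
  finally show ?thesis .
qed

theorem lemma3p1:
  fixes b :: nat
  assumes "b \<ge> 3"
  shows "\<exists>c0::nat. \<forall>c::nat. c \<ge> c0 \<and> c \<ge> 1 \<longrightarrow>
           2 * mu_ST (I_d1 b 2 c) - 2 * mu_ST (I_d1 b 1 c) > 1 / 40"
proof (intro exI[of _ 10] allI impI)
  fix c :: nat assume "10 \<le> c \<and> 1 \<le> c"
  define B where "B = real b ^ c"
  have "(3::real) ^ 10 \<le> real b ^ 10" using assms by (intro power_mono) auto
  also have "\<dots> \<le> B" unfolding B_def using assms \<open>10 \<le> c \<and> 1 \<le> c\<close> by (intro power_increasing) auto
  finally have "B \<ge> 10000" by simp
  then have "1/2 \<le> B / (2 * B - 2)" "B / (2 * B - 2) \<le> 0.5001"
    "1 \<le> B / (B - 2)" "B / (B - 2) \<le> 1.001" "1 \<le> B / (B - 1)" "B / (B - 1) \<le> 1.001"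
    by (simp_all add: field_simps)
  from mu_ST_gap[OF assms refl this] show "2 * mu_ST (I_d1 b 2 c) - 2 * mu_ST (I_d1 b 1 c) > 1 / 40"
    using mu_ST_I_d1_two_ge[of b c, folded B_def] mu_ST_I_d1_one_le[of b c, folded B_def]
      assms \<open>B \<ge> 10000\<close> \<open>10 \<le> c \<and> 1 \<le> c\<close> by simp
qed

end
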